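(* There exist sets $\{E_{\beta,\gamma}:0<\beta<\gamma\le1\}$, $E_{\beta,\gamma}\subset[1,2]$, such that each $E_{\beta,\gamma}$ is $(\beta,\gamma)$-Assouad regular, and there exists a constant $c\ge1$ such that for all $0<\beta<\gamma\le1$, all $\delta\in(0,1)$ and all intervals $I\subset[1,2]$ with $|I|>\delta$, $$N(E_{\beta,\gamma},\delta)\le c\,\delta^{-\beta},\qquad N(E_{\beta,\gamma}\cap I,\delta)\le c\,\big(\tfrac{\delta}{|I|}\big)^{-\gamma}.$$
   Context: $N(E,\delta)$ is the minimal number of intervals of length $\delta$ covering $E$. $\dim_{\mathrm M}E=\inf\{a>0:\exists c\ \forall\delta\in(0,1),\ N(E,\delta)\le c\delta^{-a}\}$. $\dim_{\mathrm A}E=\inf\{a>0:\exists c\text{ such that for all subintervals }I\subset[1,2]\text{ and }\delta\in(0,|I|),\ N(E\cap I,\delta)\le c\delta^{-a}|I|^a\}$. For $\theta\in[0,1]$, $\overline{\dim}_{\mathrm A,\theta}E=\inf\{a>0:\exists c\text{ such that for all }\delta\in(0,1)\text{ and subintervals }I\subset[1,2]\text{ with }|I|\ge\delta^\theta,\ N(E\cap I,\delta)\le c\delta^{-a}|I|^a\}$. A set $E\subset[1,2]$ is $(\beta,\gamma)$-Assouad regular if either $\gamma=0$, or $\dim_{\mathrm M}E=\beta$, $\dim_{\mathrm A}E=\gamma$ and $\overline{\dim}_{\mathrm A,\theta}E=\dim_{\mathrm A}E$ for all $\theta$ with $1>\theta>1-\beta/\gamma$. *)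

theory Defs
  imports "HOL-Analysis.Analysis"
begin

definition ilen :: "real set \<Rightarrow> real" where
  "ilen I = Sup I - Inf I"

definition covnum :: "real set \<Rightarrow> real \<Rightarrow> nat" where
  "covnum E \<delta> = Inf {n. \<exists>a::nat \<Rightarrow> real. E \<subseteq> (\<Union>i<n. {a i .. a i + \<delta>})}"

definition dimM :: "real set \<Rightarrow> real" where
  "dimM E = Inf {a. a > 0 \<and> (\<exists>c. \<forall>\<delta>. 0 < \<delta> \<and> \<delta> < 1 \<longrightarrow>
      real (covnum E \<delta>) \<le> c * \<delta> powr (-a))}"

definition dimA :: "real set \<Rightarrow> real" where
  "dimA E = Inf {a. a > 0 \<and> (\<exists>c. \<forall>I \<delta>. is_interval I \<and> I \<subseteq> {1..2} \<and>
      0 < \<delta> \<and> \<delta> < ilen I \<longrightarrow>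
      real (covnum (E \<inter> I) \<delta>) \<le> c * \<delta> powr (-a) * ilen I powr a)}"

definition dimAspec :: "real \<Rightarrow> real set \<Rightarrow> real" where
  "dimAspec \<theta> E = Inf {a. a > 0 \<and> (\<exists>c. \<forall>I \<delta>. 0 < \<delta> \<and> \<delta> < 1 \<and>
      is_interval I \<and> I \<subseteq> {1..2} \<and> ilen I \<ge> \<delta> powr \<theta> \<longrightarrow>
      real (covnum (E \<inter> I) \<delta>) \<le> c * \<delta> powr (-a) * ilen I powr a)}"

definition assouad_regular :: "real \<Rightarrow> real \<Rightarrow> real set \<Rightarrow> bool" where
  "assouad_regular \<beta> \<gamma> E \<longleftrightarrow> \<gamma> = 0 \<or>
     (dimM E = \<beta> \<and> dimA E = \<gamma> \<and>
      (\<forall>\<theta>. 1 - \<beta> / \<gamma> < \<theta> \<and> \<theta> < 1 \<longrightarrow> dimAspec \<theta> E = dimA E))"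

end

theory Submission
  imports Defs "HOL-Library.Nat_Bijection"
begin

text \<open>Fix \<open>0 < \<beta> < \<gamma> \<le> 1\<close> and \<open>\<rho> = 1 - \<beta>/\<gamma>\<close>. Choose block ends \<open>N k\<close> growing so fast
  that block \<open>k\<close>, the part of a set of density \<open>\<gamma>\<close> in \<open>(M k, N k]\<close> with \<open>M k \<approx> \<rho> N k\<close>, lies
  beyond all earlier blocks, and let \<open>E\<close> consist of the points \<open>1 + \<Sum>j\<in>D. 2^-j\<close> with \<open>D\<close> inside
  a single block. Block \<open>k\<close> alone gives about \<open>2^(\<gamma> (N k - M k)) \<approx> 2^(\<beta> N k)\<close> points which are
  \<open>2^-N k\<close>-separated and lie in an interval \<open>I\<close> of length \<open>2^-M k\<close>. At \<open>\<delta> = 2^-N k\<close> this makes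
  \<open>N(E, \<delta>)\<close> of order \<open>\<delta>^-\<beta>\<close> and \<open>N(E \<inter> I, \<delta>)\<close> of order \<open>(|I| / \<delta>)^\<gamma>\<close>, while
  \<open>|I| \<ge> \<delta>^\<theta>\<close> for every \<open>\<theta> > \<rho>\<close> and large \<open>k\<close>; so no smaller exponents are possible.

  The upper bounds count dyadic cells. At resolution \<open>2^-n\<close> a point of \<open>E\<close> is determined by its
  digits up to \<open>n\<close>: these form a subset of an earlier block, of which there are \<open>O(2^(\<beta> n))\<close>
  because \<open>\<beta> N k\<close> grows at least linearly in \<open>k\<close>, or of the current block cut off at \<open>n\<close>, which
  has at most \<open>\<gamma> (n - \<rho> n) + 1 = \<beta> n + 1\<close> elements. Inside an interval of length \<open>2^-m\<close> only the
  digits in \<open>(m, n]\<close> are free, and at most \<open>\<gamma> (n - m) + 1\<close> of them lie in the density set.\<close>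

section \<open>Covering numbers\<close>

lemma covnum_le:
  assumes "S \<subseteq> (\<Union>i<n. {a i .. a i + \<delta>})"
  shows "covnum S \<delta> \<le> n"
  unfolding covnum_def using assms by (auto intro!: cInf_lower)

lemma ex_cover_floor_cells:
  fixes \<delta> s :: real
  assumes "\<delta> > 0" "finite ((\<lambda>x. \<lfloor>(x - s) / \<delta>\<rfloor>) ` S)"
  shows "\<exists>a. S \<subseteq> (\<Union>i<card ((\<lambda>x. \<lfloor>(x - s) / \<delta>\<rfloor>) ` S). {a i .. a i + \<delta>})"
proof -
  define T where "T = (\<lambda>x. \<lfloor>(x - s) / \<delta>\<rfloor>) ` S"
  obtain h where h: "bij_betw h {..<card T} T"
    using ex_bij_betw_nat_finite assms(2) unfolding T_def lessThan_atLeast0 by blast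
  have "S \<subseteq> (\<Union>i<card T. {s + of_int (h i) * \<delta> .. s + of_int (h i) * \<delta> + \<delta>})"
  proof
    fix x assume "x \<in> S"
    then have "\<lfloor>(x - s) / \<delta>\<rfloor> \<in> h ` {..<card T}"
      using bij_betw_imp_surj_on[OF h] unfolding T_def by blast
    then obtain i where i: "i < card T" "h i = \<lfloor>(x - s) / \<delta>\<rfloor>" by auto
    have "of_int (h i) \<le> (x - s) / \<delta>" "(x - s) / \<delta> \<le> of_int (h i) + 1"
      unfolding i(2) by (simp_all add: real_of_int_floor_add_one_ge)
    then have "of_int (h i) * \<delta> \<le> x - s" "x - s \<le> of_int (h i) * \<delta> + \<delta>"
      using assms(1) by (simp_all add: field_simps)
    then show "x \<in> (\<Union>i<card T. {s + of_int (h i) * \<delta> .. s + of_int (h i) * \<delta> + \<delta>})"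
      using i(1) by (intro UN_I[of i]) auto
  qed
  then show ?thesis unfolding T_def[symmetric] by (rule exI[where x="\<lambda>i. s + of_int (h i) * \<delta>"])
qed

lemma covnum_le_card_floor_cells:
  assumes "\<delta> > 0" "finite ((\<lambda>x. \<lfloor>(x - s) / \<delta>\<rfloor>) ` S)"
  shows "covnum S \<delta> \<le> card ((\<lambda>x. \<lfloor>(x - s) / \<delta>\<rfloor>) ` S)"
  using ex_cover_floor_cells[OF assms] covnum_le by blast

lemma finite_floor_cells:
  fixes \<delta> lo :: real
  assumes "S \<subseteq> {lo..hi}" "\<delta> > 0"
  shows "finite ((\<lambda>x. \<lfloor>(x - lo) / \<delta>\<rfloor>) ` S)"
proof (rule finite_subset)
  show "(\<lambda>x. \<lfloor>(x - lo) / \<delta>\<rfloor>) ` S \<subseteq> {0..\<lfloor>(hi - lo) / \<delta>\<rfloor>}"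
  proof (rule image_subsetI)
    fix x assume "x \<in> S"
    then have "lo \<le> x" "x \<le> hi" using assms(1) by auto
    then show "\<lfloor>(x - lo) / \<delta>\<rfloor> \<in> {0..\<lfloor>(hi - lo) / \<delta>\<rfloor>}"
      using assms(2) by (auto intro!: floor_mono divide_right_mono)
  qed
qed simp

lemma ex_cover_covnum:
  assumes "S \<subseteq> {lo..hi}" "\<delta> > 0"
  shows "\<exists>a. S \<subseteq> (\<Union>i<covnum S \<delta>. {a i .. a i + \<delta>})"
proof -
  have "{n. \<exists>a::nat \<Rightarrow> real. S \<subseteq> (\<Union>i<n. {a i .. a i + \<delta>})} \<noteq> {}"
    using ex_cover_floor_cells[OF assms(2) finite_floor_cells[OF assms]] by blast
  from Inf_nat_def1[OF this] show ?thesis unfolding covnum_def by blast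
qed

lemma covnum_antimono:
  assumes "\<delta>' \<le> \<delta>" "S \<subseteq> {lo..hi}" "\<delta>' > 0"
  shows "covnum S \<delta> \<le> covnum S \<delta>'"
proof -
  obtain a where "S \<subseteq> (\<Union>i<covnum S \<delta>'. {a i .. a i + \<delta>'})"
    using ex_cover_covnum[OF assms(2,3)] by blast
  then have "S \<subseteq> (\<Union>i<covnum S \<delta>'. {a i .. a i + \<delta>})"
    using assms(1) by fastforce
  then show ?thesis by (rule covnum_le)
qed

lemma card_le_covnum:
  assumes "S \<subseteq> {lo..hi}" "\<delta> > 0" "P \<subseteq> S" "finite P"
    and sep: "\<And>x y. x \<in> P \<Longrightarrow> y \<in> P \<Longrightarrow> x \<noteq> y \<Longrightarrow> \<bar>x - y\<bar> > \<delta>"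
  shows "card P \<le> covnum S \<delta>"
proof -
  obtain a where a: "S \<subseteq> (\<Union>i<covnum S \<delta>. {a i .. a i + \<delta>})"
    using ex_cover_covnum[OF assms(1,2)] by blast
  define f where "f x = (SOME i. i < covnum S \<delta> \<and> x \<in> {a i .. a i + \<delta>})" for x
  have f: "f x < covnum S \<delta> \<and> x \<in> {a (f x) .. a (f x) + \<delta>}" if "x \<in> P" for x
  proof -
    have "\<exists>i. i < covnum S \<delta> \<and> x \<in> {a i .. a i + \<delta>}" using a that assms(3) by blast
    then show ?thesis unfolding f_def by (rule someI_ex)
  qed
  have "inj_on f P"
  proof (rule inj_onI, rule ccontr)
    fix x y assume xy: "x \<in> P" "y \<in> P" "f x = f y" "x \<noteq> y"
    then have "\<bar>x - y\<bar> \<le> \<delta>" using f[OF xy(1)] f[OF xy(2)] by auto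
    then show False using sep[OF xy(1,2,4)] by linarith
  qed
  moreover have "f ` P \<subseteq> {..<covnum S \<delta>}" using f by auto
  ultimately show ?thesis by (metis card_inj_on_le card_lessThan finite_lessThan)
qed

lemma covnum_empty: "covnum {} \<delta> = 0"
  using covnum_le[where S="{}" and n=0] by simp

definition dyadic_cells :: "nat \<Rightarrow> real set \<Rightarrow> int set" where
  "dyadic_cells n S = (\<lambda>x. \<lfloor>(x - 1) * 2^n\<rfloor>) ` S"

lemma covnum_le_card_dyadic_cells:
  assumes "finite (dyadic_cells n S)"
  shows "covnum S ((1/2)^n) \<le> card (dyadic_cells n S)"
proof -
  have "(\<lambda>x. \<lfloor>(x - 1) / (1/2)^n\<rfloor>) ` S = dyadic_cells n S"
    unfolding dyadic_cells_def by (simp add: power_one_over)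
  then show ?thesis using covnum_le_card_floor_cells[of "(1/2)^n" 1 S] assms by simp
qed

lemma dyadic_cells_interval:
  assumes "S \<subseteq> {a .. a + t}" "t < 2 * (1/2)^m"
  shows "dyadic_cells m S \<subseteq> {\<lfloor>(a - 1) * 2^m\<rfloor> .. \<lfloor>(a - 1) * 2^m\<rfloor> + 2}"
proof (unfold dyadic_cells_def, rule image_subsetI)
  fix x assume "x \<in> S"
  then have x: "a \<le> x" "x \<le> a + t" using assms(1) by auto
  have "t * 2^m < 2" using assms(2) by (simp add: power_one_over field_simps)
  moreover have "(x - 1) * 2^m \<le> (a - 1) * 2^m + t * 2^m"
    using mult_right_mono[OF x(2), of "2^m"] by (simp add: algebra_simps)
  ultimately have "(x - 1) * 2^m < of_int (\<lfloor>(a - 1) * 2^m\<rfloor> + 3)"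
    using real_of_int_floor_add_one_gt[of "(a - 1) * 2^m"] by linarith
  then have "\<lfloor>(x - 1) * 2^m\<rfloor> < \<lfloor>(a - 1) * 2^m\<rfloor> + 3" by (simp only: floor_less_iff)
  moreover have "(a - 1) * 2^m \<le> (x - 1) * 2^m" using x by (intro mult_right_mono) auto
  ultimately show "\<lfloor>(x - 1) * 2^m\<rfloor> \<in> {\<lfloor>(a - 1) * 2^m\<rfloor> .. \<lfloor>(a - 1) * 2^m\<rfloor> + 2}"
    by (auto intro: floor_mono)
qed

lemma ilen_le_one:
  assumes "I \<subseteq> {1..2}" "I \<noteq> {}"
  shows "ilen I \<le> 1"
proof -
  have "1 \<le> Inf I" "Sup I \<le> 2" using assms by (auto intro!: cInf_greatest cSup_least)
  then show ?thesis unfolding ilen_def by simp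
qed

lemma subset_Icc_Inf_ilen:
  assumes "I \<subseteq> {1..2}"
  shows "I \<subseteq> {Inf I .. Inf I + ilen I}"
proof -
  have "bdd_above I" "bdd_below I" using assms by (auto intro: bdd_above_mono bdd_below_mono)
  then show ?thesis unfolding ilen_def by (auto intro: cInf_lower cSup_upper)
qed

lemma dyadic_scale:
  fixes x :: real
  assumes "0 < x" "x \<le> 1"
  shows "\<exists>n. (1/2)^n \<le> x \<and> x < 2 * (1/2)^n"
proof -
  obtain n0 where "(1/2::real)^n0 < x" using real_arch_pow_inv[of x "1/2"] assms by auto
  then have ex: "\<exists>n. (1/2::real)^n \<le> x" by (auto intro: less_imp_le)
  define n where "n = (LEAST n. (1/2::real)^n \<le> x)"
  have le: "(1/2::real)^n \<le> x" unfolding n_def using ex by (rule LeastI_ex)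
  show ?thesis
  proof (cases n)
    case 0
    then show ?thesis using le assms by (intro exI[of _ n]) simp
  next
    case (Suc j)
    then have "\<not> (1/2::real)^j \<le> x" using not_less_Least[of j "\<lambda>n. (1/2::real)^n \<le> x"] n_def by simp
    then show ?thesis using le Suc by (intro exI[of _ n]) auto
  qed
qed

lemma two_powr_mult_le:
  fixes x k a :: real
  assumes "0 < x" "2 powr k \<le> 2 * x" "0 \<le> a" "a \<le> 1"
  shows "2 powr (a * k) \<le> 2 * x powr a"
proof -
  have "2 powr (a * k) = (2 powr k) powr a" by (simp add: powr_powr mult.commute)
  also have "\<dots> \<le> (2 * x) powr a" using assms by (intro powr_mono2) auto
  also have "\<dots> = 2 powr a * x powr a" using assms by (simp add: powr_mult)
  also have "\<dots> \<le> 2 * x powr a"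
    using powr_mono[of a 1 2] assms by (intro mult_right_mono) auto
  finally show ?thesis .
qed

lemma mult_two_powr_less:
  assumes "log 2 (\<bar>c\<bar> + 1) \<le> u - v"
  shows "c * 2 powr v < 2 powr u"
proof -
  have "c < 2 powr (log 2 (\<bar>c\<bar> + 1))" by simp
  also have "\<dots> \<le> 2 powr (u - v)" using assms by (intro powr_mono) auto
  finally show ?thesis by (simp add: powr_diff pos_less_divide_eq)
qed

lemma half_power_powr: "((1/2::real)^n) powr a = 2 powr (- real n * a)"
proof -
  have "(1/2::real)^n = 2 powr (- real n)"
    by (simp add: powr_minus powr_realpow power_one_over inverse_eq_divide)
  then show ?thesis by (simp add: powr_powr)
qed

lemma divide_powr_uminus:
  fixes x y a :: real
  assumes "0 < x" "0 < y"
  shows "(x / y) powr (-a) = x powr (-a) * y powr a"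
  using assms by (simp add: powr_divide powr_minus_divide)

lemma dimM_eqI:
  assumes "0 < s"
    and upper: "\<And>\<delta>. 0 < \<delta> \<Longrightarrow> \<delta> < 1 \<Longrightarrow> real (covnum E \<delta>) \<le> c * \<delta> powr (-s)"
    and lower: "\<And>a c. 0 < a \<Longrightarrow> a < s \<Longrightarrow>
      \<exists>\<delta>. 0 < \<delta> \<and> \<delta> < 1 \<and> c * \<delta> powr (-a) < real (covnum E \<delta>)"
  shows "dimM E = s"
  unfolding dimM_def
proof (rule cInf_eq_minimum, goal_cases)
  case 1
  show ?case using assms(1) upper by blast
next
  case (2 a)
  then obtain c where "0 < a" and c: "\<forall>\<delta>. 0 < \<delta> \<and> \<delta> < 1 \<longrightarrow> real (covnum E \<delta>) \<le> c * \<delta> powr (-a)"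
    by blast
  show ?case
  proof (rule ccontr)
    assume "\<not> s \<le> a"
    with lower[of a c] \<open>0 < a\<close> c show False by force
  qed
qed

lemma dimA_eqI:
  assumes "0 < s"
    and upper: "\<And>I \<delta>. is_interval I \<Longrightarrow> I \<subseteq> {1..2} \<Longrightarrow> 0 < \<delta> \<Longrightarrow> \<delta> < ilen I \<Longrightarrow>
      real (covnum (E \<inter> I) \<delta>) \<le> c * \<delta> powr (-s) * ilen I powr s"
    and lower: "\<And>a c. 0 < a \<Longrightarrow> a < s \<Longrightarrow> \<exists>I \<delta>. is_interval I \<and> I \<subseteq> {1..2} \<and>
      0 < \<delta> \<and> \<delta> < ilen I \<and> c * \<delta> powr (-a) * ilen I powr a < real (covnum (E \<inter> I) \<delta>)"
  shows "dimA E = s"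
  unfolding dimA_def
proof (rule cInf_eq_minimum, goal_cases)
  case 1
  show ?case using assms(1) upper by blast
next
  case (2 a)
  then obtain c where "0 < a" and c: "\<forall>I \<delta>. is_interval I \<and> I \<subseteq> {1..2} \<and> 0 < \<delta> \<and>
      \<delta> < ilen I \<longrightarrow> real (covnum (E \<inter> I) \<delta>) \<le> c * \<delta> powr (-a) * ilen I powr a"
    by blast
  show ?case
  proof (rule ccontr)
    assume "\<not> s \<le> a"
    with lower[of a c] \<open>0 < a\<close> c show False by force
  qed
qed

lemma dimAspec_eqI:
  assumes "0 < s"
    and upper: "\<And>I \<delta>. 0 < \<delta> \<Longrightarrow> \<delta> < 1 \<Longrightarrow> is_interval I \<Longrightarrow> I \<subseteq> {1..2} \<Longrightarrow>
      \<delta> powr \<theta> \<le> ilen I \<Longrightarrow> real (covnum (E \<inter> I) \<delta>) \<le> c * \<delta> powr (-s) * ilen I powr s"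
    and lower: "\<And>a c. 0 < a \<Longrightarrow> a < s \<Longrightarrow> \<exists>I \<delta>. 0 < \<delta> \<and> \<delta> < 1 \<and> is_interval I \<and>
      I \<subseteq> {1..2} \<and> \<delta> powr \<theta> \<le> ilen I \<and> c * \<delta> powr (-a) * ilen I powr a < real (covnum (E \<inter> I) \<delta>)"
  shows "dimAspec \<theta> E = s"
  unfolding dimAspec_def
proof (rule cInf_eq_minimum, goal_cases)
  case 1
  show ?case using assms(1) upper by blast
next
  case (2 a)
  then obtain c where "0 < a" and c: "\<forall>I \<delta>. 0 < \<delta> \<and> \<delta> < 1 \<and> is_interval I \<and> I \<subseteq> {1..2} \<and>
      \<delta> powr \<theta> \<le> ilen I \<longrightarrow> real (covnum (E \<inter> I) \<delta>) \<le> c * \<delta> powr (-a) * ilen I powr a"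
    by blast
  show ?case
  proof (rule ccontr)
    assume "\<not> s \<le> a"
    with lower[of a c] \<open>0 < a\<close> c show False by force
  qed
qed

section \<open>Binary points and a set of density \<open>\<gamma>\<close>\<close>

definition bin_point :: "nat set \<Rightarrow> real" where
  "bin_point D = 1 + (\<Sum>j\<in>D. (1/2)^j)"

lemma sum_half_powers_Ioc: "n \<le> L \<Longrightarrow> (\<Sum>j\<in>{n<..L}. (1/2::real)^j) = (1/2)^n - (1/2)^L"
proof (induction L rule: dec_induct)
  case (step L)
  then have "{n<..Suc L} = insert (Suc L) {n<..L}" by auto
  then show ?case using step by simp
qed simp

lemma sum_half_powers_less:
  assumes "finite D" "D \<subseteq> {n<..}"
  shows "(\<Sum>j\<in>D. (1/2::real)^j) < (1/2)^n"
proof (cases "D = {}")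
  case False
  have "n \<le> Max D" using False assms Max_ge[OF assms(1)] by fastforce
  have "(\<Sum>j\<in>D. (1/2::real)^j) \<le> (\<Sum>j\<in>{n<..Max D}. (1/2)^j)"
    using assms by (intro sum_mono2) auto
  also have "\<dots> < (1/2)^n" using sum_half_powers_Ioc[OF \<open>n \<le> Max D\<close>] by simp
  finally show ?thesis .
qed simp

lemma bin_point_bounds:
  assumes "finite D" "D \<subseteq> {n<..}"
  shows "bin_point D \<in> {1 .. 1 + (1/2)^n}"
  using sum_half_powers_less[OF assms] sum_nonneg[of D "\<lambda>j. (1/2::real)^j"]
  unfolding bin_point_def by auto

lemma floor_bin_point:
  assumes "finite D"
  shows "\<lfloor>(bin_point D - 1) * 2^n\<rfloor> = (\<Sum>j\<in>D \<inter> {..n}. (2::int)^(n-j))"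
proof -
  have split: "(\<Sum>j\<in>D. (1/2::real)^j) = (\<Sum>j\<in>D \<inter> {..n}. (1/2)^j) + (\<Sum>j\<in>D \<inter> {n<..}. (1/2)^j)"
    using assms by (subst sum.union_disjoint[symmetric]) (auto intro!: sum.cong)
  have "(1/2::real)^j * 2^n = 2^(n-j)" if "j \<le> n" for j
    using that by (simp add: power_one_over power_diff)
  then have head: "(\<Sum>j\<in>D \<inter> {..n}. (1/2::real)^j) * 2^n = of_int (\<Sum>j\<in>D \<inter> {..n}. (2::int)^(n-j))"
    by (auto simp: sum_distrib_right intro!: sum.cong)
  have "(\<Sum>j\<in>D \<inter> {n<..}. (1/2::real)^j) < (1/2)^n"
    using assms by (intro sum_half_powers_less) auto
  moreover have "0 \<le> (\<Sum>j\<in>D \<inter> {n<..}. (1/2::real)^j)" by (intro sum_nonneg) auto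
  ultimately have tail: "(\<Sum>j\<in>D \<inter> {n<..}. (1/2::real)^j) * 2^n \<in> {0..<1}"
    by (auto simp: power_one_over field_simps)
  have "(bin_point D - 1) * 2^n = of_int (\<Sum>j\<in>D \<inter> {..n}. (2::int)^(n-j)) + (\<Sum>j\<in>D \<inter> {n<..}. (1/2)^j) * 2^n"
    unfolding bin_point_def split head[symmetric] by (simp add: distrib_right)
  then show ?thesis using tail by (simp add: floor_unique)
qed

lemma sum_two_powers_split:
  assumes "m \<le> n" "finite D"
  shows "(\<Sum>j\<in>D \<inter> {..n}. (2::int)^(n-j)) =
    2^(n-m) * (\<Sum>j\<in>D \<inter> {..m}. 2^(m-j)) + (\<Sum>j\<in>D \<inter> {m<..n}. 2^(n-j))"
proof -
  have "D \<inter> {..n} = (D \<inter> {..m}) \<union> (D \<inter> {m<..n})" using assms by auto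
  then have "(\<Sum>j\<in>D \<inter> {..n}. (2::int)^(n-j)) = (\<Sum>j\<in>D \<inter> {..m}. 2^(n-j)) + (\<Sum>j\<in>D \<inter> {m<..n}. 2^(n-j))"
    using assms by (simp add: sum.union_disjoint[symmetric] disjoint_iff)
  moreover have "(\<Sum>j\<in>D \<inter> {..m}. (2::int)^(n-j)) = 2^(n-m) * (\<Sum>j\<in>D \<inter> {..m}. 2^(m-j))"
    using assms by (auto simp: sum_distrib_left power_add[symmetric] intro!: sum.cong)
  ultimately show ?thesis by simp
qed

lemma bin_point_set_encode:
  assumes "D \<subseteq> {..N}"
  shows "bin_point D = 1 + real (set_encode ((\<lambda>j. N - j) ` D)) / 2^N"
proof -
  have "inj_on (\<lambda>j. N - j) D" using assms by (auto simp: inj_on_def subset_iff) (metis diff_diff_cancel)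
  then have "set_encode ((\<lambda>j. N - j) ` D) = (\<Sum>j\<in>D. 2^(N-j))"
    unfolding set_encode_def by (simp add: sum.reindex)
  then have "real (set_encode ((\<lambda>j. N - j) ` D)) / 2^N = (\<Sum>j\<in>D. (1/2::real)^j)"
    using assms by (auto simp: sum_divide_distrib power_diff field_simps intro!: sum.cong)
  then show ?thesis unfolding bin_point_def by simp
qed

lemma bin_point_dist:
  assumes "D \<subseteq> {..N}" "D' \<subseteq> {..N}" "D \<noteq> D'"
  shows "(1/2)^N \<le> \<bar>bin_point D - bin_point D'\<bar>"
proof -
  define f where "f j = N - j" for j
  have "inj_on f {..N}" by (auto simp: inj_on_def f_def)
  then have "f ` D \<noteq> f ` D'" using inj_on_image_eq_iff assms by metis
  moreover have "finite (f ` D)" "finite (f ` D')" using assms finite_subset by blast+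
  ultimately have "set_encode (f ` D) \<noteq> set_encode (f ` D')" by (simp add: set_encode_eq)
  then have "1 \<le> \<bar>real (set_encode (f ` D)) - real (set_encode (f ` D'))\<bar>" by linarith
  then have "1 / 2^N \<le> \<bar>real (set_encode (f ` D)) - real (set_encode (f ` D'))\<bar> / 2^N"
    by (intro divide_right_mono) auto
  then show ?thesis using bin_point_set_encode[OF assms(1)] bin_point_set_encode[OF assms(2)]
    unfolding f_def by (simp add: power_one_over abs_divide diff_divide_distrib[symmetric])
qed

lemma inj_on_bin_point: "inj_on bin_point (Pow {..N})"
proof (rule inj_onI, rule ccontr)
  fix D D' assume "D \<in> Pow {..N}" "D' \<in> Pow {..N}" "bin_point D = bin_point D'" "D \<noteq> D'"
  then have "(1/2::real)^N \<le> 0" using bin_point_dist[of D N D'] by simp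
  then show False using zero_less_power[of "1/2::real" N] by linarith
qed

text \<open>A set of density exactly \<open>\<gamma>\<close> at every scale.\<close>
definition density_set :: "real \<Rightarrow> nat set" where
  "density_set \<gamma> = {j. \<lfloor>\<gamma> * real j\<rfloor> > \<lfloor>\<gamma> * (real j - 1)\<rfloor>}"

lemma card_density_set:
  assumes "0 \<le> \<gamma>" "\<gamma> \<le> 1" "m \<le> n"
  shows "int (card (density_set \<gamma> \<inter> {m<..n})) = \<lfloor>\<gamma> * real n\<rfloor> - \<lfloor>\<gamma> * real m\<rfloor>"
  using assms(3)
proof (induction n rule: dec_induct)
  case (step n)
  have "\<lfloor>\<gamma> * real n\<rfloor> \<le> \<lfloor>\<gamma> * real (Suc n)\<rfloor>"
    using assms by (intro floor_mono mult_left_mono) auto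
  moreover have "\<lfloor>\<gamma> * real (Suc n)\<rfloor> \<le> \<lfloor>\<gamma> * real n\<rfloor> + 1"
    using assms floor_mono[of "\<gamma> * real (Suc n)" "\<gamma> * real n + 1"] by (simp add: algebra_simps)
  moreover have "density_set \<gamma> \<inter> {m<..Suc n} = (if Suc n \<in> density_set \<gamma>
      then insert (Suc n) (density_set \<gamma> \<inter> {m<..n}) else density_set \<gamma> \<inter> {m<..n})"
    using step by (auto simp: le_Suc_eq)
  moreover have "Suc n \<in> density_set \<gamma> \<longleftrightarrow> \<lfloor>\<gamma> * real n\<rfloor> < \<lfloor>\<gamma> * real (Suc n)\<rfloor>"
    unfolding density_set_def by simp
  ultimately show ?case using step by (auto split: if_splits)
qed simp

lemma card_density_set_bounds:
  assumes "0 \<le> \<gamma>" "\<gamma> \<le> 1" "m \<le> n"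
  shows "real (card (density_set \<gamma> \<inter> {m<..n})) \<le> \<gamma> * (real n - real m) + 1"
    and "\<gamma> * (real n - real m) - 1 \<le> real (card (density_set \<gamma> \<inter> {m<..n}))"
proof -
  have card: "real (card (density_set \<gamma> \<inter> {m<..n})) = of_int (\<lfloor>\<gamma> * real n\<rfloor> - \<lfloor>\<gamma> * real m\<rfloor>)"
    using card_density_set[OF assms] by (metis of_int_of_nat_eq)
  show "real (card (density_set \<gamma> \<inter> {m<..n})) \<le> \<gamma> * (real n - real m) + 1"
    unfolding card using floor_le_iff[of "\<gamma> * real n"] le_floor_iff[of _ "\<gamma> * real m"]
    by (simp add: algebra_simps) linarith
  show "\<gamma> * (real n - real m) - 1 \<le> real (card (density_set \<gamma> \<inter> {m<..n}))"
    unfolding card by (simp add: algebra_simps) linarith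
qed

lemma card_Pow_le_two_powr:
  assumes "finite S" "real (card S) \<le> X"
  shows "real (card (Pow S)) \<le> 2 powr X"
  using assms by (simp add: card_Pow powr_realpow[symmetric])

text \<open>The increment \<open>N k / \<rho>\<close> makes block \<open>k + 1\<close> start after block \<open>k\<close> ends; the increment
  \<open>1 / \<beta>\<close> makes \<open>\<beta> N k\<close> grow by at least one per step.\<close>
primrec block_end :: "real \<Rightarrow> real \<Rightarrow> nat \<Rightarrow> nat" where
  "block_end \<beta> \<gamma> 0 = 0"
| "block_end \<beta> \<gamma> (Suc k) =
    block_end \<beta> \<gamma> k + nat \<lceil>real (block_end \<beta> \<gamma> k) / (1 - \<beta>/\<gamma>)\<rceil> + nat \<lceil>1/\<beta>\<rceil>"

definition block_start :: "real \<Rightarrow> real \<Rightarrow> nat \<Rightarrow> nat" where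
  "block_start \<beta> \<gamma> k = nat \<lceil>(1 - \<beta>/\<gamma>) * real (block_end \<beta> \<gamma> k)\<rceil>"

definition block :: "real \<Rightarrow> real \<Rightarrow> nat \<Rightarrow> nat set" where
  "block \<beta> \<gamma> k = density_set \<gamma> \<inter> {block_start \<beta> \<gamma> k <.. block_end \<beta> \<gamma> k}"

definition block_points :: "real \<Rightarrow> real \<Rightarrow> nat \<Rightarrow> real set" where
  "block_points \<beta> \<gamma> k = bin_point ` Pow (block \<beta> \<gamma> k)"

definition Eset :: "real \<Rightarrow> real \<Rightarrow> real set" where
  "Eset \<beta> \<gamma> = (\<Union>k. block_points \<beta> \<gamma> k)"

locale exponent_pair =
  fixes \<beta> \<gamma> :: real
  assumes pos: "0 < \<beta>" and less: "\<beta> < \<gamma>" and le_one: "\<gamma> \<le> 1"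
begin

abbreviation "\<rho> \<equiv> 1 - \<beta>/\<gamma>"
abbreviation "N \<equiv> block_end \<beta> \<gamma>"
abbreviation "M \<equiv> block_start \<beta> \<gamma>"
abbreviation "B \<equiv> block \<beta> \<gamma>"

lemma gamma_pos: "0 < \<gamma>"
  using pos less by simp

lemma rho_bounds: "0 < \<rho>" "\<rho> < 1"
  using pos less by (auto simp: field_simps)

lemma le_block_end: "k \<le> N k"
proof (induction k)
  case (Suc k)
  have "0 < \<lceil>1/\<beta>\<rceil>" using pos by simp
  then have "1 \<le> nat \<lceil>1/\<beta>\<rceil>" by linarith
  then show ?case using Suc by simp
qed simp

lemma block_end_mono: "k \<le> k' \<Longrightarrow> N k \<le> N k'"
  by (induction k' rule: dec_induct) (auto intro: le_trans)

lemma block_end_large: "0 < \<epsilon> \<Longrightarrow> eventually (\<lambda>k. X \<le> \<epsilon> * real (N k)) sequentially"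
  unfolding eventually_sequentially
proof (intro exI allI impI)
  fix k assume "0 < \<epsilon>" "nat \<lceil>X / \<epsilon>\<rceil> \<le> k"
  then have "X / \<epsilon> \<le> real (N k)" using le_block_end[of k] by linarith
  then show "X \<le> \<epsilon> * real (N k)" using \<open>0 < \<epsilon>\<close> by (simp add: divide_le_eq mult.commute)
qed

lemma block_start_bounds: "\<rho> * real (N k) \<le> real (M k)" "real (M k) < \<rho> * real (N k) + 1"
proof -
  have "0 \<le> \<rho> * real (N k)" using rho_bounds by simp
  then have "real (M k) = of_int \<lceil>\<rho> * real (N k)\<rceil>" unfolding block_start_def by simp
  then show "\<rho> * real (N k) \<le> real (M k)" "real (M k) < \<rho> * real (N k) + 1" by linarith+
qed

lemma block_start_le_end: "M k \<le> N k"
  using block_start_bounds(1)[of k] rho_bounds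
  by (simp add: block_start_def ceiling_le_iff nat_le_iff mult_left_le_one_le)

lemma block_end_le_next_start: "N k \<le> M (Suc k)"
proof -
  have "real (N k) / \<rho> \<le> real (N (Suc k))" by simp linarith
  then have "real (N k) \<le> \<rho> * real (N (Suc k))" using rho_bounds by (simp add: field_simps)
  then show ?thesis using block_start_bounds(1)[of "Suc k"] by linarith
qed

lemma block_end_step: "\<beta> * real (N k) + 1 \<le> \<beta> * real (N (Suc k))"
proof -
  have "1 \<le> \<beta> * real (nat \<lceil>1/\<beta>\<rceil>)"
    using pos mult_left_mono[of "1/\<beta>" "of_int \<lceil>1/\<beta>\<rceil>" \<beta>] by simp
  moreover have "0 \<le> \<beta> * real (nat \<lceil>real (N k) / \<rho>\<rceil>)" using pos by simp
  ultimately show ?thesis by (simp add: algebra_simps)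
qed

lemma card_block_prefix_le:
  assumes "M K \<le> n" "n \<le> N K"
  shows "real (card (density_set \<gamma> \<inter> {M K<..n})) \<le> \<beta> * real n + 1"
proof -
  have "\<rho> * real n \<le> \<rho> * real (N K)" using assms(2) rho_bounds by (intro mult_left_mono) auto
  then have "\<rho> * real n \<le> real (M K)" using block_start_bounds(1)[of K] by linarith
  then have "\<gamma> * (real n - real (M K)) \<le> \<beta> * real n"
    using pos less by (simp add: field_simps)
  then show ?thesis
    using card_density_set_bounds(1)[OF _ le_one assms(1)] gamma_pos by linarith
qed

lemma card_block_le: "real (card (B k)) \<le> \<beta> * real (N k) + 1"
  unfolding block_def using card_block_prefix_le[OF block_start_le_end order_refl] .

lemma card_block_ge_gap: "\<gamma> * (real (N k) - real (M k)) - 1 \<le> real (card (B k))"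
  unfolding block_def using card_density_set_bounds(2)[OF _ le_one block_start_le_end] gamma_pos by simp

lemma card_block_ge: "\<beta> * real (N k) - 2 \<le> real (card (B k))"
proof -
  have "\<gamma> * (real (N k) - (\<rho> * real (N k) + 1)) \<le> \<gamma> * (real (N k) - real (M k))"
    using block_start_bounds(2)[of k] pos less by (intro mult_left_mono) auto
  moreover have "\<gamma> * (real (N k) - (\<rho> * real (N k) + 1)) = \<beta> * real (N k) - \<gamma>"
    using pos less by (simp add: field_simps)
  ultimately show ?thesis using card_block_ge_gap[of k] le_one by linarith
qed

lemma block_points_subset: "block_points \<beta> \<gamma> k \<subseteq> {1 .. 1 + (1/2)^(M k)}"
  unfolding block_points_def block_def
  by (auto intro!: bin_point_bounds elim: finite_subset)

lemma mem_Eset_iff: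
  "x \<in> Eset \<beta> \<gamma> \<longleftrightarrow> (\<exists>k D. D \<subseteq> B k \<and> x = bin_point D)"
  unfolding Eset_def block_points_def by blast

lemma finite_block: "finite (B k)"
  unfolding block_def by auto

lemma Eset_subset: "Eset \<beta> \<gamma> \<subseteq> {1..2}"
proof
  fix x assume "x \<in> Eset \<beta> \<gamma>"
  then obtain k where "x \<in> block_points \<beta> \<gamma> k" unfolding Eset_def by blast
  then have "x \<in> {1 .. 1 + (1/2)^(M k)}" using block_points_subset by blast
  moreover have "(1/2::real)^(M k) \<le> 1" by (simp add: power_le_one)
  ultimately show "x \<in> {1..2}" by simp
qed

section \<open>Upper bounds\<close>

text \<open>At resolution \<open>2^-n\<close> the blocks ending before \<open>n\<close> are seen completely, block \<open>K\<close>
  only through its digits up to \<open>n\<close>, and the later blocks, which start after \<open>N K \<ge> n\<close>, not at all.\<close>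
lemma dyadic_cells_Eset_subset:
  assumes "n \<le> N K" "\<And>k. k < K \<Longrightarrow> N k < n"
  shows "dyadic_cells n (Eset \<beta> \<gamma>) \<subseteq> (\<lambda>D. \<Sum>j\<in>D. (2::int)^(n-j)) `
    ((\<Union>k<K. Pow (B k)) \<union> Pow (density_set \<gamma> \<inter> {M K<..n}))"
proof (unfold dyadic_cells_def, rule image_subsetI)
  fix x assume "x \<in> Eset \<beta> \<gamma>"
  then obtain k D where D: "D \<subseteq> B k" "x = bin_point D" by (auto simp: mem_Eset_iff)
  have "D \<inter> {..n} \<in> (\<Union>k<K. Pow (B k)) \<union> Pow (density_set \<gamma> \<inter> {M K<..n})"
  proof (cases k K rule: linorder_cases)
    case less
    then have "N k < n" by (rule assms(2))
    then have "D \<inter> {..n} = D" using D(1) by (auto simp: block_def)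
    then show ?thesis using less D(1) by auto
  next
    case equal
    then show ?thesis using D(1) by (auto simp: block_def)
  next
    case greater
    then obtain j where "k = Suc j" "K \<le> j" by (cases k) auto
    then have "N K \<le> M k" using block_end_mono block_end_le_next_start le_trans by blast
    then have "D \<inter> {..n} = {}" using D(1) assms(1) by (auto simp: block_def)
    then show ?thesis by auto
  qed
  moreover have "\<lfloor>(x - 1) * 2^n\<rfloor> = (\<Sum>j\<in>D \<inter> {..n}. 2^(n-j))"
    using D floor_bin_point finite_subset[OF D(1) finite_block] by simp
  ultimately show "\<lfloor>(x - 1) * 2^n\<rfloor> \<in> (\<lambda>D. \<Sum>j\<in>D. (2::int)^(n-j)) `
      ((\<Union>k<K. Pow (B k)) \<union> Pow (density_set \<gamma> \<inter> {M K<..n}))" by blast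
qed

text \<open>Each block adds at least one to \<open>\<beta> N k\<close>, so the counts \<open>2^card (B k) \<le> 2 * 2^(\<beta> N k)\<close>
  grow geometrically and their sum is dominated by the last one.\<close>
lemma card_Pow_blocks_le: "real (card (\<Union>k\<le>j. Pow (B k))) \<le> 4 * 2 powr (\<beta> * real (N j))"
proof (induction j)
  case 0
  have "B 0 = {}" by (simp add: block_def block_start_def)
  then show ?case by simp
next
  case (Suc j)
  have "real (card (\<Union>k\<le>Suc j. Pow (B k))) \<le> real (card (\<Union>k\<le>j. Pow (B k))) + real (card (Pow (B (Suc j))))"
    unfolding atMost_Suc UN_insert by (metis card_Un_le of_nat_add of_nat_le_iff Un_commute)
  also have "\<dots> \<le> 4 * 2 powr (\<beta> * real (N j)) + 2 powr (\<beta> * real (N (Suc j)) + 1)"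
    using Suc card_block_le[of "Suc j"] finite_block by (intro add_mono card_Pow_le_two_powr) auto
  also have "\<dots> \<le> 4 * 2 powr (\<beta> * real (N (Suc j)))"
  proof -
    have "2 powr (\<beta> * real (N j) + 1) \<le> 2 powr (\<beta> * real (N (Suc j)))"
      using block_end_step[of j] by (intro powr_mono) auto
    then show ?thesis by (simp add: powr_add)
  qed
  finally show ?case .
qed

lemma ex_first_block_end_ge: "\<exists>K. n \<le> N K \<and> (\<forall>k<K. N k < n)"
proof -
  define K where "K = (LEAST k. n \<le> N k)"
  have "n \<le> N K" unfolding K_def by (rule LeastI[of _ n]) (rule le_block_end)
  moreover have "N k < n" if "k < K" for k using not_less_Least[OF that[unfolded K_def]] by simp
  ultimately show ?thesis by blast
qed

lemma card_Pow_blocks_before_le: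
  assumes "\<And>k. k < K \<Longrightarrow> N k < n"
  shows "real (card (\<Union>k<K. Pow (B k))) \<le> 4 * 2 powr (\<beta> * real n)"
proof (cases K)
  case (Suc j)
  then have "real (card (\<Union>k<K. Pow (B k))) \<le> 4 * 2 powr (\<beta> * real (N j))"
    using card_Pow_blocks_le[of j] by (simp add: lessThan_Suc_atMost)
  also have "\<dots> \<le> 4 * 2 powr (\<beta> * real n)" using assms[of j] Suc pos by simp
  finally show ?thesis .
qed simp

lemma card_dyadic_cells_Eset:
  "finite (dyadic_cells n (Eset \<beta> \<gamma>))"
  "real (card (dyadic_cells n (Eset \<beta> \<gamma>))) \<le> 6 * 2 powr (\<beta> * real n)"
proof -
  obtain K where K: "n \<le> N K" and before_K: "\<And>k. k < K \<Longrightarrow> N k < n"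
    using ex_first_block_end_ge by blast
  define A where "A = (\<Union>k<K. Pow (B k)) \<union> Pow (density_set \<gamma> \<inter> {M K<..n})"
  have "finite A" unfolding A_def using finite_block by auto
  moreover have sub: "dyadic_cells n (Eset \<beta> \<gamma>) \<subseteq> (\<lambda>D. \<Sum>j\<in>D. (2::int)^(n-j)) ` A"
    unfolding A_def using dyadic_cells_Eset_subset[OF K before_K] .
  ultimately show "finite (dyadic_cells n (Eset \<beta> \<gamma>))" by (rule finite_surj)
  have "card (dyadic_cells n (Eset \<beta> \<gamma>)) \<le> card A"
    using sub \<open>finite A\<close> by (meson card_image_le card_mono finite_imageI le_trans)
  also have "card A \<le> card (\<Union>k<K. Pow (B k)) + card (Pow (density_set \<gamma> \<inter> {M K<..n}))"
    unfolding A_def by (rule card_Un_le)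
  finally have "real (card (dyadic_cells n (Eset \<beta> \<gamma>))) \<le>
      real (card (\<Union>k<K. Pow (B k))) + real (card (Pow (density_set \<gamma> \<inter> {M K<..n})))"
    by linarith
  moreover have "real (card (\<Union>k<K. Pow (B k))) \<le> 4 * 2 powr (\<beta> * real n)"
    using before_K by (rule card_Pow_blocks_before_le)
  moreover have "real (card (Pow (density_set \<gamma> \<inter> {M K<..n}))) \<le> 2 * 2 powr (\<beta> * real n)"
  proof (cases "M K \<le> n")
    case True
    then show ?thesis using card_Pow_le_two_powr[OF _ card_block_prefix_le[OF True K]]
      by (simp add: powr_add)
  next
    case False
    have "1 \<le> 2 powr (\<beta> * real n)" using pos by (intro ge_one_powr_ge_zero) auto
    then show ?thesis using False by simp
  qed
  ultimately show "real (card (dyadic_cells n (Eset \<beta> \<gamma>))) \<le> 6 * 2 powr (\<beta> * real n)"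
    by linarith
qed

lemma covnum_Eset_le:
  assumes "0 < \<delta>" "\<delta> < 1"
  shows "real (covnum (Eset \<beta> \<gamma>) \<delta>) \<le> 12 * \<delta> powr (-\<beta>)"
proof -
  obtain n where n: "(1/2)^n \<le> \<delta>" "\<delta> < 2 * (1/2)^n" using dyadic_scale assms by force
  have "covnum (Eset \<beta> \<gamma>) \<delta> \<le> covnum (Eset \<beta> \<gamma>) ((1/2)^n)"
    using n Eset_subset by (intro covnum_antimono) auto
  also have "\<dots> \<le> card (dyadic_cells n (Eset \<beta> \<gamma>))"
    using card_dyadic_cells_Eset(1) by (rule covnum_le_card_dyadic_cells)
  finally have "real (covnum (Eset \<beta> \<gamma>) \<delta>) \<le> 6 * 2 powr (\<beta> * real n)"
    using card_dyadic_cells_Eset(2)[of n] by linarith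
  also have "2 powr (\<beta> * real n) \<le> 2 * (1 / \<delta>) powr \<beta>"
    using n assms pos less le_one by (intro two_powr_mult_le) (auto simp: powr_realpow field_simps)
  also have "(1 / \<delta>) powr \<beta> = \<delta> powr (-\<beta>)"
    using assms by (simp add: powr_divide powr_minus_divide)
  finally show ?thesis by simp
qed

text \<open>Refining from resolution \<open>2^-m\<close> to \<open>2^-n\<close>, a cell index is the coarse index shifted by
  \<open>n - m\<close> bits plus a contribution of the digits in \<open>(m, n]\<close>, which all lie in the density set.\<close>
lemma dyadic_cells_refine:
  assumes "m \<le> n" "S \<subseteq> Eset \<beta> \<gamma>" "dyadic_cells m S \<subseteq> {k0..k0+2}"
  shows "dyadic_cells n S \<subseteq> (\<lambda>(a, c). 2^(n-m) * a + c) `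
    ({k0..k0+2} \<times> (\<lambda>D. \<Sum>j\<in>D. (2::int)^(n-j)) ` Pow (density_set \<gamma> \<inter> {m<..n}))"
proof (unfold dyadic_cells_def, rule image_subsetI)
  fix x assume "x \<in> S"
  then obtain k D where D: "D \<subseteq> B k" "x = bin_point D"
    using assms(2) mem_Eset_iff by blast
  have fin: "finite D" using D(1) finite_block finite_subset by blast
  have "\<lfloor>(x - 1) * 2^m\<rfloor> \<in> {k0..k0+2}" using assms(3) \<open>x \<in> S\<close> unfolding dyadic_cells_def by blast
  then have "(\<Sum>j\<in>D \<inter> {..m}. (2::int)^(m-j)) \<in> {k0..k0+2}"
    using D(2) floor_bin_point[OF fin] by simp
  moreover have "D \<inter> {m<..n} \<in> Pow (density_set \<gamma> \<inter> {m<..n})"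
    using D(1) by (auto simp: block_def)
  moreover have "\<lfloor>(x - 1) * 2^n\<rfloor> =
      2^(n-m) * (\<Sum>j\<in>D \<inter> {..m}. 2^(m-j)) + (\<Sum>j\<in>D \<inter> {m<..n}. 2^(n-j))"
    using D(2) floor_bin_point[OF fin] sum_two_powers_split[OF assms(1) fin] by simp
  ultimately show "\<lfloor>(x - 1) * 2^n\<rfloor> \<in> (\<lambda>(a, c). 2^(n-m) * a + c) `
      ({k0..k0+2} \<times> (\<lambda>D. \<Sum>j\<in>D. (2::int)^(n-j)) ` Pow (density_set \<gamma> \<inter> {m<..n}))"
    by (auto intro!: image_eqI[where x="((\<Sum>j\<in>D \<inter> {..m}. 2^(m-j)), (\<Sum>j\<in>D \<inter> {m<..n}. 2^(n-j)))"])
qed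

lemma card_dyadic_cells_refine:
  assumes "m \<le> n" "S \<subseteq> Eset \<beta> \<gamma>" "dyadic_cells m S \<subseteq> {k0..k0+2}"
  shows "finite (dyadic_cells n S)"
    and "real (card (dyadic_cells n S)) \<le> 6 * 2 powr (\<gamma> * (real n - real m))"
proof -
  define R where "R = (\<lambda>D. \<Sum>j\<in>D. (2::int)^(n-j)) ` Pow (density_set \<gamma> \<inter> {m<..n})"
  have sub: "dyadic_cells n S \<subseteq> (\<lambda>(a, c). 2^(n-m) * a + c) ` ({k0..k0+2} \<times> R)"
    unfolding R_def using dyadic_cells_refine[OF assms] .
  have fin: "finite ({k0..k0+2} \<times> R)" unfolding R_def by auto
  from fin sub show "finite (dyadic_cells n S)" by (rule finite_surj)
  have "card (dyadic_cells n S) \<le> card ({k0..k0+2} \<times> R)"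
    using sub fin by (meson card_image_le card_mono finite_imageI le_trans)
  also have "\<dots> = 3 * card R" by (simp add: card_cartesian_product)
  also have "card R \<le> card (Pow (density_set \<gamma> \<inter> {m<..n}))" unfolding R_def by (rule card_image_le) auto
  finally have "real (card (dyadic_cells n S)) \<le> 3 * real (card (Pow (density_set \<gamma> \<inter> {m<..n})))"
    by linarith
  also have "real (card (Pow (density_set \<gamma> \<inter> {m<..n}))) \<le> 2 powr (\<gamma> * (real n - real m) + 1)"
    using card_density_set_bounds(1)[OF _ le_one assms(1)] gamma_pos
    by (intro card_Pow_le_two_powr) auto
  finally show "real (card (dyadic_cells n S)) \<le> 6 * 2 powr (\<gamma> * (real n - real m))"
    by (simp add: powr_add)
qed

text \<open>Choose dyadic scales \<open>2^-n \<approx> \<delta>\<close> and \<open>2^-m \<approx> ilen I\<close>; then \<open>I\<close> meets at most three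
  cells of size \<open>2^-m\<close>, and each of them only \<open>2^(\<gamma> (n - m))\<close> cells of size \<open>2^-n\<close>.\<close>
lemma covnum_Eset_inter_le:
  assumes "I \<subseteq> {1..2}" "0 < \<delta>" "\<delta> < ilen I"
  shows "real (covnum (Eset \<beta> \<gamma> \<inter> I) \<delta>) \<le> 12 * (\<delta> / ilen I) powr (-\<gamma>)"
proof (cases "I = {}")
  case True
  then show ?thesis by (simp add: covnum_empty)
next
  case False
  define t where "t = ilen I"
  have t: "\<delta> < t" "t \<le> 1" using assms(3) ilen_le_one[OF assms(1) False] unfolding t_def by auto
  obtain n where n: "(1/2)^n \<le> \<delta>" "\<delta> < 2 * (1/2)^n" using dyadic_scale assms(2) t by force
  obtain m where m: "(1/2)^m \<le> t" "t < 2 * (1/2)^m" using dyadic_scale[of t] assms(2) t by auto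
  have "m \<le> n"
  proof (rule ccontr)
    assume "\<not> m \<le> n"
    then have "(1/2::real)^m \<le> (1/2)^(Suc n)" by (intro power_decreasing) auto
    then show False using n m t by simp
  qed
  have "Eset \<beta> \<gamma> \<inter> I \<subseteq> {Inf I .. Inf I + t}" using subset_Icc_Inf_ilen[OF assms(1)] unfolding t_def by blast
  then have cells: "dyadic_cells m (Eset \<beta> \<gamma> \<inter> I) \<subseteq> {\<lfloor>(Inf I - 1) * 2^m\<rfloor> .. \<lfloor>(Inf I - 1) * 2^m\<rfloor> + 2}"
    using m(2) by (rule dyadic_cells_interval)
  have "covnum (Eset \<beta> \<gamma> \<inter> I) \<delta> \<le> covnum (Eset \<beta> \<gamma> \<inter> I) ((1/2)^n)"
    using n Eset_subset by (intro covnum_antimono[where lo=1 and hi=2]) auto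
  also have "\<dots> \<le> card (dyadic_cells n (Eset \<beta> \<gamma> \<inter> I))"
    using card_dyadic_cells_refine(1)[OF \<open>m \<le> n\<close> _ cells] by (intro covnum_le_card_dyadic_cells) auto
  finally have "real (covnum (Eset \<beta> \<gamma> \<inter> I) \<delta>) \<le> 6 * 2 powr (\<gamma> * (real n - real m))"
    using card_dyadic_cells_refine(2)[OF \<open>m \<le> n\<close> _ cells] by force
  also have "2 powr (\<gamma> * (real n - real m)) \<le> 2 * (t / \<delta>) powr \<gamma>"
  proof (rule two_powr_mult_le)
    have "2 powr (real n - real m) = (1/2)^m / (1/2)^n"
      by (simp add: powr_diff powr_realpow power_one_over)
    also have "\<dots> \<le> 2 * t / \<delta>" using n m assms(2) by (simp add: field_simps)
    finally show "2 powr (real n - real m) \<le> 2 * (t / \<delta>)" by simp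
  qed (use assms(2) t gamma_pos le_one in auto)
  also have "(t / \<delta>) powr \<gamma> = (\<delta> / t) powr (-\<gamma>)"
    using assms(2) t by (simp add: powr_divide powr_minus_divide)
  finally show ?thesis unfolding t_def by simp
qed

section \<open>Lower bounds and dimensions\<close>

lemma card_block_points: "real (card (block_points \<beta> \<gamma> k)) = 2 powr real (card (B k))"
proof -
  have "inj_on bin_point (Pow (B k))"
    by (rule inj_on_subset[OF inj_on_bin_point[of "N k"]]) (auto simp: block_def)
  then have "card (block_points \<beta> \<gamma> k) = 2 ^ card (B k)"
    unfolding block_points_def using finite_block by (simp add: card_image card_Pow)
  then show ?thesis by (simp add: powr_realpow)
qed

lemma block_points_separated:
  assumes "x \<in> block_points \<beta> \<gamma> k" "y \<in> block_points \<beta> \<gamma> k" "x \<noteq> y"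
  shows "(1/2)^(N k + 1) < \<bar>x - y\<bar>"
proof -
  obtain D D' where "D \<subseteq> B k" "D' \<subseteq> B k" "x = bin_point D" "y = bin_point D'"
    using assms(1,2) unfolding block_points_def by blast
  moreover from this have "(1/2)^(N k) \<le> \<bar>bin_point D - bin_point D'\<bar>"
    using assms(3) by (intro bin_point_dist) (auto simp: block_def)
  moreover have "(1/2::real)^(N k + 1) < (1/2)^(N k)" by simp
  ultimately show ?thesis by linarith
qed

lemma card_block_points_le_covnum:
  assumes "block_points \<beta> \<gamma> k \<subseteq> T" "T \<subseteq> {1..2}"
  shows "card (block_points \<beta> \<gamma> k) \<le> covnum T ((1/2)^(N k + 1))"
  using assms finite_block block_points_separated
  by (intro card_le_covnum[where lo=1 and hi=2]) (auto simp: block_points_def)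

lemma covnum_Eset_gt:
  assumes "a < \<beta>"
  shows "\<exists>\<delta>. 0 < \<delta> \<and> \<delta> < 1 \<and> c * \<delta> powr (-a) < real (covnum (Eset \<beta> \<gamma>) \<delta>)"
proof -
  have "0 < \<beta> - a" using assms by simp
  then obtain k where k: "log 2 (\<bar>c\<bar> + 1) + 3 \<le> (\<beta> - a) * real (N k)"
    using eventually_happens'[OF sequentially_bot block_end_large] by blast
  define \<delta> where "\<delta> = (1/2::real)^(N k + 1)"
  have "0 < \<delta>" "\<delta> < 1" unfolding \<delta>_def using power_Suc_less_one[of "1/2::real" "N k"] by auto
  have "c * \<delta> powr (-a) = c * 2 powr (a * (real (N k) + 1))"
    unfolding \<delta>_def half_power_powr by (simp add: algebra_simps)
  also have "\<dots> < 2 powr (\<beta> * real (N k) - 2)"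
    using k assms pos less le_one by (intro mult_two_powr_less) (simp add: algebra_simps)
  also have "\<dots> \<le> real (card (block_points \<beta> \<gamma> k))"
    unfolding card_block_points using card_block_ge[of k] by simp
  also have "\<dots> \<le> real (covnum (Eset \<beta> \<gamma>) \<delta>)"
    using card_block_points_le_covnum[OF _ Eset_subset] unfolding \<delta>_def Eset_def by auto
  finally show ?thesis using \<open>0 < \<delta>\<close> \<open>\<delta> < 1\<close> by blast
qed

lemma block_scale_le:
  assumes "\<rho> < \<theta>" "1 \<le> (\<theta> - \<rho>) * real (N k)"
  shows "((1/2::real)^(N k + 1)) powr \<theta> \<le> (1/2)^(M k)"
proof -
  have "real (M k) \<le> \<theta> * (real (N k) + 1)"
    using block_start_bounds(2)[of k] assms rho_bounds by (simp add: algebra_simps)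
  then have "((1/2::real)^(N k + 1)) powr \<theta> \<le> 2 powr (- real (M k))"
    unfolding half_power_powr by (intro powr_mono) (auto simp: algebra_simps)
  also have "\<dots> = (1/2)^(M k)" using half_power_powr[of "M k" 1] by simp
  finally show ?thesis .
qed

lemma card_block_points_gt:
  assumes "0 \<le> a" "a < \<gamma>" "log 2 (\<bar>c\<bar> + 1) + 3 \<le> (\<gamma> - a) * (\<beta> / \<gamma>) * real (N k)"
  shows "c * ((1/2::real)^(N k + 1)) powr (-a) * ((1/2)^(M k)) powr a < real (card (block_points \<beta> \<gamma> k))"
proof -
  have gap: "\<beta> / \<gamma> * real (N k) - 1 < real (N k) - real (M k)"
    using block_start_bounds(2)[of k] by (simp add: algebra_simps)
  have "c * ((1/2::real)^(N k + 1)) powr (-a) * ((1/2)^(M k)) powr a =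
      c * 2 powr (a * (real (N k) + 1) - a * real (M k))"
    unfolding half_power_powr by (simp add: powr_add[symmetric] algebra_simps)
  also have "\<dots> < 2 powr (\<gamma> * (real (N k) - real (M k)) - 1)"
  proof (rule mult_two_powr_less)
    have "(\<gamma> - a) * (\<beta> / \<gamma> * real (N k) - 1) \<le> (\<gamma> - a) * (real (N k) - real (M k))"
      using gap assms(2) by (intro mult_left_mono) auto
    then show "log 2 (\<bar>c\<bar> + 1) \<le> \<gamma> * (real (N k) - real (M k)) - 1 - (a * (real (N k) + 1) - a * real (M k))"
      using assms le_one by (simp add: algebra_simps)
  qed
  also have "\<dots> \<le> real (card (block_points \<beta> \<gamma> k))"
    unfolding card_block_points using card_block_ge_gap[of k] by simp
  finally show ?thesis .
qed

lemma covnum_Eset_inter_gt: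
  assumes "\<rho> < \<theta>" "\<theta> < 1" "0 \<le> a" "a < \<gamma>"
  shows "\<exists>I \<delta>. 0 < \<delta> \<and> \<delta> < 1 \<and> is_interval I \<and> I \<subseteq> {1..2} \<and> \<delta> powr \<theta> \<le> ilen I \<and>
    \<delta> < ilen I \<and> c * \<delta> powr (-a) * ilen I powr a < real (covnum (Eset \<beta> \<gamma> \<inter> I) \<delta>)"
proof -
  have "eventually (\<lambda>k. 1 \<le> (\<theta> - \<rho>) * real (N k) \<and>
      log 2 (\<bar>c\<bar> + 1) + 3 \<le> (\<gamma> - a) * (\<beta> / \<gamma>) * real (N k)) sequentially"
    using assms pos gamma_pos by (intro eventually_conj block_end_large) auto
  then obtain k where k: "1 \<le> (\<theta> - \<rho>) * real (N k)"
      "log 2 (\<bar>c\<bar> + 1) + 3 \<le> (\<gamma> - a) * (\<beta> / \<gamma>) * real (N k)"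
    using eventually_happens'[OF sequentially_bot] by blast
  define \<delta> where "\<delta> = (1/2::real)^(N k + 1)"
  define I where "I = {1 .. 1 + (1/2::real)^(M k)}"
  have ilen: "ilen I = (1/2)^(M k)" unfolding I_def ilen_def by simp
  have "0 < \<delta>" "\<delta> < 1" unfolding \<delta>_def using power_Suc_less_one[of "1/2::real" "N k"] by auto
  moreover have "I \<subseteq> {1..2}" unfolding I_def using power_le_one[of "1/2::real" "M k"] by auto
  moreover have "\<delta> powr \<theta> \<le> ilen I"
    unfolding \<delta>_def ilen using block_scale_le[OF assms(1) k(1)] .
  moreover have "\<delta> < ilen I" unfolding ilen \<delta>_def using block_start_le_end[of k]
    by (intro power_strict_decreasing) auto
  moreover have "c * \<delta> powr (-a) * ilen I powr a < real (card (block_points \<beta> \<gamma> k))"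
    unfolding \<delta>_def ilen using card_block_points_gt[OF assms(3,4) k(2)] .
  moreover have "card (block_points \<beta> \<gamma> k) \<le> covnum (Eset \<beta> \<gamma> \<inter> I) \<delta>"
  proof -
    have "block_points \<beta> \<gamma> k \<subseteq> Eset \<beta> \<gamma> \<inter> I"
      using block_points_subset[of k] unfolding I_def Eset_def by blast
    then show ?thesis unfolding \<delta>_def using Eset_subset by (intro card_block_points_le_covnum) blast+
  qed
  ultimately show ?thesis by (intro exI[of _ I] exI[of _ \<delta>]) (auto simp: I_def)
qed

lemma covnum_Eset_inter_le_powr:
  assumes "I \<subseteq> {1..2}" "0 < \<delta>" "\<delta> < ilen I"
  shows "real (covnum (Eset \<beta> \<gamma> \<inter> I) \<delta>) \<le> 12 * \<delta> powr (-\<gamma>) * ilen I powr \<gamma>"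
  using covnum_Eset_inter_le[OF assms] divide_powr_uminus[of \<delta> "ilen I" \<gamma>] assms
  by (simp add: mult.assoc)

lemma dimM_Eset: "dimM (Eset \<beta> \<gamma>) = \<beta>"
  using pos covnum_Eset_le covnum_Eset_gt by (intro dimM_eqI) auto

lemma dimA_Eset: "dimA (Eset \<beta> \<gamma>) = \<gamma>"
proof (rule dimA_eqI[OF gamma_pos])
  show "real (covnum (Eset \<beta> \<gamma> \<inter> I) \<delta>) \<le> 12 * \<delta> powr (-\<gamma>) * ilen I powr \<gamma>"
    if "I \<subseteq> {1..2}" "0 < \<delta>" "\<delta> < ilen I" for I \<delta>
    using that by (rule covnum_Eset_inter_le_powr)
next
  fix a c :: real assume "0 < a" "a < \<gamma>"
  obtain \<theta> where "\<rho> < \<theta>" "\<theta> < 1" using rho_bounds dense by blast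
  then show "\<exists>I \<delta>. is_interval I \<and> I \<subseteq> {1..2} \<and> 0 < \<delta> \<and> \<delta> < ilen I \<and>
      c * \<delta> powr (-a) * ilen I powr a < real (covnum (Eset \<beta> \<gamma> \<inter> I) \<delta>)"
    using covnum_Eset_inter_gt[of \<theta> a c] \<open>0 < a\<close> \<open>a < \<gamma>\<close> by fastforce
qed

lemma dimAspec_Eset:
  assumes "\<rho> < \<theta>" "\<theta> < 1"
  shows "dimAspec \<theta> (Eset \<beta> \<gamma>) = \<gamma>"
proof (rule dimAspec_eqI[OF gamma_pos])
  fix I \<delta> assume "0 < \<delta>" "\<delta> < 1" "I \<subseteq> {1..2}" "\<delta> powr \<theta> \<le> ilen I"
  moreover have "\<delta> powr 1 < \<delta> powr \<theta>" using \<open>0 < \<delta>\<close> \<open>\<delta> < 1\<close> assms(2) by (rule powr_less_mono')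
  ultimately show "real (covnum (Eset \<beta> \<gamma> \<inter> I) \<delta>) \<le> 12 * \<delta> powr (-\<gamma>) * ilen I powr \<gamma>"
    by (intro covnum_Eset_inter_le_powr) auto
next
  fix a c :: real assume "0 < a" "a < \<gamma>"
  then show "\<exists>I \<delta>. 0 < \<delta> \<and> \<delta> < 1 \<and> is_interval I \<and> I \<subseteq> {1..2} \<and> \<delta> powr \<theta> \<le> ilen I \<and>
      c * \<delta> powr (-a) * ilen I powr a < real (covnum (Eset \<beta> \<gamma> \<inter> I) \<delta>)"
    using covnum_Eset_inter_gt[OF assms, of a c] by fastforce
qed

lemma assouad_regular_Eset: "assouad_regular \<beta> \<gamma> (Eset \<beta> \<gamma>)"
  unfolding assouad_regular_def using dimM_Eset dimA_Eset dimAspec_Eset by simp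

end

theorem lemma6p1:
  shows "\<exists>E :: real \<Rightarrow> real \<Rightarrow> real set.
    (\<forall>\<beta> \<gamma>. 0 < \<beta> \<and> \<beta> < \<gamma> \<and> \<gamma> \<le> 1 \<longrightarrow>
        E \<beta> \<gamma> \<subseteq> {1..2} \<and> assouad_regular \<beta> \<gamma> (E \<beta> \<gamma>)) \<and>
    (\<exists>c::real. c \<ge> 1 \<and>
      (\<forall>\<beta> \<gamma> \<delta> I. 0 < \<beta> \<and> \<beta> < \<gamma> \<and> \<gamma> \<le> 1 \<and> 0 < \<delta> \<and> \<delta> < 1 \<and>
         is_interval I \<and> I \<subseteq> {1..2} \<and> ilen I > \<delta> \<longrightarrow>
         real (covnum (E \<beta> \<gamma>) \<delta>) \<le> c * \<delta> powr (-\<beta>) \<and>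
         real (covnum (E \<beta> \<gamma> \<inter> I) \<delta>) \<le> c * (\<delta> / ilen I) powr (-\<gamma>)))"
proof (intro exI[of _ Eset] conjI allI impI)
  fix \<beta> \<gamma> :: real
  assume "0 < \<beta> \<and> \<beta> < \<gamma> \<and> \<gamma> \<le> 1"
  then interpret exponent_pair \<beta> \<gamma> by unfold_locales auto
  show "Eset \<beta> \<gamma> \<subseteq> {1..2}" by (rule Eset_subset)
  show "assouad_regular \<beta> \<gamma> (Eset \<beta> \<gamma>)" by (rule assouad_regular_Eset)
next
  show "\<exists>c::real. c \<ge> 1 \<and>
      (\<forall>\<beta> \<gamma> \<delta> I. 0 < \<beta> \<and> \<beta> < \<gamma> \<and> \<gamma> \<le> 1 \<and> 0 < \<delta> \<and> \<delta> < 1 \<and>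
         is_interval I \<and> I \<subseteq> {1..2} \<and> ilen I > \<delta> \<longrightarrow>
         real (covnum (Eset \<beta> \<gamma>) \<delta>) \<le> c * \<delta> powr (-\<beta>) \<and>
         real (covnum (Eset \<beta> \<gamma> \<inter> I) \<delta>) \<le> c * (\<delta> / ilen I) powr (-\<gamma>))"
  proof (intro exI[of _ 12] conjI allI impI)
    fix \<beta> \<gamma> \<delta> :: real and I
    assume h: "0 < \<beta> \<and> \<beta> < \<gamma> \<and> \<gamma> \<le> 1 \<and> 0 < \<delta> \<and> \<delta> < 1 \<and>
      is_interval I \<and> I \<subseteq> {1..2} \<and> ilen I > \<delta>"
    then interpret exponent_pair \<beta> \<gamma> by unfold_locales auto
    show "real (covnum (Eset \<beta> \<gamma>) \<delta>) \<le> 12 * \<delta> powr (-\<beta>)"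
      using h covnum_Eset_le by auto
    show "real (covnum (Eset \<beta> \<gamma> \<inter> I) \<delta>) \<le> 12 * (\<delta> / ilen I) powr (-\<gamma>)"
      using h covnum_Eset_inter_le by auto
  qed simp
qed

end
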